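(* For every integer $N\ge5$, \[ h(N)>\left\lfloor\frac{\lfloor\sqrt{N}\rfloor+1}{2}\right\rfloor. \]
   Context: A finite set $A\subseteq\mathbb{Z}$ is Sidon if $a+b=c+d$ with $a,b,c,d\in A$ implies $\{a,b\}=\{c,d\}$ as unordered pairs. For a natural number $N$, $h(N)=\max\{|A| : A\subseteq\{1,\dots,N\},\ A\text{ Sidon}\}$. *)

theory Defs
  imports Complex_Main
begin

definition sidon :: "int set \<Rightarrow> bool" where
  "sidon A \<longleftrightarrow> finite A \<and>
     (\<forall>a\<in>A. \<forall>b\<in>A. \<forall>c\<in>A. \<forall>d\<in>A. a + b = c + d \<longrightarrow> {a, b} = {c, d})"

definition h :: "nat \<Rightarrow> nat" where
  "h N = Max {card A | A. A \<subseteq> {1..int N} \<and> sidon A}"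

end

theory Submission
  imports Defs "HOL-Number_Theory.Number_Theory"
begin

(* If A is a Sidon set modulo M with m elements, then some window of L consecutive
   residues contains at least mL/M elements of A, and these, shifted into {1..L}, form a Sidon
   set of integers. Ruzsa's set {x : x = i (mod p - 1), x = g^i (mod p)}, for a primitive root g
   modulo a prime p, is a Sidon set of p - 1 elements modulo p(p - 1).
   Let k = floor((floor(sqrt N) + 1) / 2), so that (2k - 1)^2 <= N. For k >= 3, Erdos' proof of
   Chebyshev's bound gives a prime p with k + 1 < p <= 4k - 4. Then pk < (2k - 1)^2 <= N, so a
   window of length min(N, p(p - 1)) contains more than k elements of Ruzsa's set. For k <= 2
   the sets {1,2} and {1,2,4} suffice. *)

section \<open>A prime between n and 4n - 8\<close>

lemma prod_primes_dvd:
  fixes S :: "nat set"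
  assumes "finite S" and "\<And>p. p \<in> S \<Longrightarrow> prime p \<and> p dvd c"
  shows "\<Prod>S dvd c"
  using assms
proof (induction S rule: finite_induct)
  case empty
  then show ?case by simp
next
  case (insert q F)
  have "coprime q (\<Prod>F)"
    using insert by (intro prod_coprime_right) (auto intro: primes_coprime)
  then show ?case
    using insert by (simp add: divides_mult)
qed

lemma binomial_odd_middle_le: "(2*k+1) choose k \<le> (4::nat)^k"
proof -
  have "2 * ((2*k+1) choose k) = ((2*k+1) choose k) + ((2*k+1) choose (k+1))"
    using binomial_symmetric[of k "2*k+1"] by simp
  also have "\<dots> = (\<Sum>i\<in>{k, k+1}. (2*k+1) choose i)"
    by simp
  also have "\<dots> \<le> (\<Sum>i\<le>2*k+1. (2*k+1) choose i)"
    by (intro sum_mono2) auto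
  also have "\<dots> = 2^(2*k+1)"
    by (rule choose_row_sum)
  also have "\<dots> = 2 * 4^k"
    by (simp add: power_add power_mult)
  finally show ?thesis
    by simp
qed

lemma prod_primes_between_dvd_binomial:
  "\<Prod>{p. prime p \<and> k+1 < p \<and> p \<le> 2*k+1} dvd (2*k+1) choose k"
proof (rule prod_primes_dvd)
  show "finite {p. prime p \<and> k+1 < p \<and> p \<le> 2*k+1}"
    by (rule finite_subset[of _ "{..2*k+1}"]) auto
next
  fix p
  assume p: "p \<in> {p. prime p \<and> k+1 < p \<and> p \<le> 2*k+1}"
  have "p dvd fact (2*k+1)"
    using p prime_dvd_fact_iff[of p "2*k+1"] by auto
  also have "fact (2*k+1) = fact k * fact (k+1) * ((2*k+1) choose k)"
    using binomial_fact_lemma[of k "2*k+1"] by (simp add: mult_ac)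
  finally have "p dvd fact k * fact (k+1) * ((2*k+1) choose k)" .
  moreover have "\<not> p dvd fact k" "\<not> p dvd fact (k+1)"
    using p prime_dvd_fact_iff[of p k] prime_dvd_fact_iff[of p "k+1"] by auto
  ultimately show "prime p \<and> p dvd (2*k+1) choose k"
    using p by (auto simp: prime_dvd_mult_iff)
qed

lemma nat_parity_cases:
  fixes n :: nat
  obtains "n \<le> 1" | "n = 2" | "n > 2" "even n" | k where "n = 2*k+1" "k \<ge> 1"
proof (cases "even n")
  case True
  consider "n \<le> 1" | "n = 2" | "n > 2"
    by linarith
  then show ?thesis
    using True that(1-3) by cases auto
next
  case False
  then obtain k where "n = 2*k+1"
    using oddE by blast
  then show ?thesis
    using that(1) that(4)[of k] by (cases "k = 0") auto
qed

lemma primorial_odd_le: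
  "\<Prod>{p::nat. prime p \<and> p \<le> 2*k+1} \<le> \<Prod>{p. prime p \<and> p \<le> k+1} * 4^k"
proof -
  let ?small = "{p::nat. prime p \<and> p \<le> k+1}"
  let ?large = "{p. prime p \<and> k+1 < p \<and> p \<le> 2*k+1}"
  have split: "{p::nat. prime p \<and> p \<le> 2*k+1} = ?small \<union> ?large"
    by auto
  have "finite ?small"
    by (rule finite_subset[of _ "{..k+1}"]) auto
  moreover have "finite ?large"
    by (rule finite_subset[of _ "{..2*k+1}"]) auto
  ultimately have "\<Prod>{p::nat. prime p \<and> p \<le> 2*k+1} = \<Prod>?small * \<Prod>?large"
    unfolding split by (intro prod.union_disjoint) auto
  also have "\<dots> \<le> \<Prod>?small * 4^k"
  proof (rule mult_le_mono2)
    have "\<Prod>?large \<le> (2*k+1) choose k"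
      by (rule dvd_imp_le[OF prod_primes_between_dvd_binomial]) simp
    then show "\<Prod>?large \<le> 4^k"
      using binomial_odd_middle_le by (rule order_trans)
  qed
  finally show ?thesis .
qed

lemma primorial_le_four_pow: "\<Prod>{p::nat. prime p \<and> p \<le> n} \<le> 4^n"
proof (induction n rule: less_induct)
  case (less n)
  consider "n \<le> 1" | "n = 2" | "n > 2" "even n" | k where "n = 2*k+1" "k \<ge> 1"
    by (rule nat_parity_cases)
  then show ?case
  proof cases
    case 1
    then have "{p::nat. prime p \<and> p \<le> n} = {}"
      by (auto dest: prime_ge_2_nat)
    then have "\<Prod>{p::nat. prime p \<and> p \<le> n} = 1"
      by (simp only: prod.empty)
    then show ?thesis
      by simp
  next
    case 2
    then have "{p::nat. prime p \<and> p \<le> n} = {2}"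
      by (auto dest: prime_ge_2_nat)
    then show ?thesis
      using 2 by simp
  next
    case 3
    then have "\<not> prime n"
      using prime_odd_nat[of n] by auto
    then have "prime p \<and> p \<le> n \<longleftrightarrow> prime p \<and> p \<le> n - 1" for p
      by (cases "p = n") auto
    then have "\<Prod>{p::nat. prime p \<and> p \<le> n} = \<Prod>{p. prime p \<and> p \<le> n - 1}"
      by simp
    also have "\<dots> \<le> 4^(n - 1)"
      using less 3 by simp
    also have "\<dots> \<le> 4^n"
      by (rule power_increasing) auto
    finally show ?thesis .
  next
    case 4
    then have "\<Prod>{p::nat. prime p \<and> p \<le> n} \<le> \<Prod>{p. prime p \<and> p \<le> k+1} * 4^k"
      using primorial_odd_le by simp
    also have "\<dots> \<le> 4^(k+1) * 4^k"
      using less[of "k+1"] 4 by simp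
    also have "\<dots> = 4^n"
      using 4 by (simp add: power_add[symmetric])
    finally show ?thesis .
  qed
qed

lemma multiplicity_fact:
  fixes p :: nat
  assumes p: "prime p" and "n < p^K"
  shows "multiplicity p (fact n) = (\<Sum>i\<in>{1..K}. n div p^i)"
  using assms(2)
proof (induction n)
  case 0
  then show ?case by simp
next
  case (Suc n)
  define v where "v = multiplicity p (Suc n)"
  have "p^v \<le> Suc n"
    unfolding v_def by (intro dvd_imp_le multiplicity_dvd) simp
  then have "p^v < p^K"
    using Suc.prems by linarith
  then have "v < K"
    using power_less_imp_less_exp[OF prime_gt_1_nat[OF p]] by blast
  have dvd_iff: "p^i dvd Suc n \<longleftrightarrow> i \<le> v" for i
    unfolding v_def using p by (intro power_dvd_iff_le_multiplicity) (auto simp: not_prime_unit)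
  have "{1..K} \<inter> {i. p^i dvd Suc n} = {1..v}"
    using \<open>v < K\<close> by (auto simp: dvd_iff)
  then have "(\<Sum>i\<in>{1..K}. of_bool (p^i dvd Suc n)) = v"
    by simp
  moreover have "Suc n div p^i = n div p^i + of_bool (p^i dvd Suc n)" for i
    by (simp add: div_Suc dvd_eq_mod_eq_0)
  ultimately have sum_Suc: "(\<Sum>i\<in>{1..K}. Suc n div p^i) = (\<Sum>i\<in>{1..K}. n div p^i) + v"
    by (simp add: sum.distrib)
  have "multiplicity p (fact (Suc n)) = multiplicity p (Suc n * fact n)"
    by (simp only: fact_Suc of_nat_id)
  also have "\<dots> = v + multiplicity p (fact n)"
    unfolding v_def using p by (intro prime_elem_multiplicity_mult_distrib) auto
  finally show ?case
    using Suc sum_Suc by simp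
qed

lemma double_div_le: "2*m div d \<le> 2*(m div d) + of_bool (d \<le> 2*m)" for m d :: nat
proof (cases "d = 0 \<or> 2*m < d")
  case True
  then show ?thesis
    by auto
next
  case False
  define q r where "q = m div d" and "r = m mod d"
  have "m = r + d*q"
    unfolding q_def r_def by simp
  then have "2*m = 2*r + d*(2*q)"
    by (simp add: algebra_simps)
  then have "2*m div d = 2*q + 2*r div d"
    using False by simp
  moreover have "2*r div d < 2"
    unfolding r_def using False by (intro less_mult_imp_div_less) simp
  ultimately show ?thesis
    using False unfolding q_def by simp
qed

lemma prime_power_multiplicity_central_binomial_le:
  fixes p m :: nat
  assumes p: "prime p" and "m > 0"
  shows "p ^ multiplicity p ((2*m) choose m) \<le> 2*m"
proof -
  obtain t where t: "p^t \<le> 2*m" "2*m < p^(t+1)"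
    using ex_power_ivl1[of p "2*m"] p assms(2) prime_ge_2_nat by auto
  define K where "K = {1..t+1}"
  have "fact (2*m) = fact m * fact m * ((2*m) choose m)"
    using binomial_fact_lemma[of m "2*m"] by simp
  then have "multiplicity p (fact (2*m)) =
      2 * multiplicity p (fact m) + multiplicity p ((2*m) choose m)"
    using p by (simp add: prime_elem_multiplicity_mult_distrib)
  moreover have "multiplicity p (fact (2*m)) = (\<Sum>i\<in>K. 2*m div p^i)"
    unfolding K_def using p t by (intro multiplicity_fact) auto
  moreover have "multiplicity p (fact m) = (\<Sum>i\<in>K. m div p^i)"
    unfolding K_def using p t by (intro multiplicity_fact) auto
  moreover have "(\<Sum>i\<in>K. 2*m div p^i) \<le> (\<Sum>i\<in>K. 2*(m div p^i) + of_bool (p^i \<le> 2*m))"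
    by (intro sum_mono double_div_le)
  moreover have "(\<Sum>i\<in>K. of_bool (p^i \<le> 2*m)) \<le> t"
  proof -
    have "K \<inter> {i. p^i \<le> 2*m} \<subseteq> {1..t}"
    proof
      fix i
      assume "i \<in> K \<inter> {i. p^i \<le> 2*m}"
      then have "i \<ge> 1" and "p^i < p^(t+1)"
        unfolding K_def using t by auto
      moreover from this(2) have "i < t+1"
        by (rule power_less_imp_less_exp[OF prime_gt_1_nat[OF p]])
      ultimately show "i \<in> {1..t}"
        by simp
    qed
    then have "card (K \<inter> {i. p^i \<le> 2*m}) \<le> t"
      using card_mono[of "{1..t}"] by fastforce
    moreover have "finite K"
      unfolding K_def by simp
    ultimately show ?thesis
      by simp
  qed
  ultimately have "multiplicity p ((2*m) choose m) \<le> t"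
    by (simp add: sum.distrib sum_distrib_left)
  then have "p ^ multiplicity p ((2*m) choose m) \<le> p^t"
    using prime_gt_0_nat[OF p] by (intro power_increasing) auto
  then show ?thesis
    using t by simp
qed

lemma multiplicity_central_binomial_le_1:
  fixes p m :: nat
  assumes p: "prime p" and "m > 0" and "2*m < p^2"
  shows "multiplicity p ((2*m) choose m) \<le> 1"
proof -
  have "p ^ multiplicity p ((2*m) choose m) < p^2"
    using prime_power_multiplicity_central_binomial_le[OF p \<open>m > 0\<close>] assms(3) by linarith
  then have "multiplicity p ((2*m) choose m) < 2"
    by (rule power_less_imp_less_exp[OF prime_gt_1_nat[OF p]])
  then show ?thesis
    by simp
qed

lemma central_binomial_le_without_large_primes:
  fixes m n B :: nat
  assumes m: "m > 0" and B: "2*m < B^2"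
    and no_prime: "\<And>p. prime p \<Longrightarrow> n < p \<Longrightarrow> p \<le> 2*m \<Longrightarrow> False"
  shows "(2*m) choose m \<le> (2*m)^B * 4^n"
proof -
  define C where "C = (2*m) choose m"
  define P where "P = prime_factors C"
  have factor_le: "p ^ multiplicity p C \<le> 2*m" if "p \<in> P" for p
    using that m unfolding P_def C_def
    by (intro prime_power_multiplicity_central_binomial_le) (auto simp: in_prime_factors_iff)
  have "C = (\<Prod>p\<in>P. p ^ multiplicity p C)"
    unfolding P_def C_def by (intro prime_factorization_nat) simp
  also have "\<dots> = (\<Prod>p\<in>P \<inter> {..<B}. p ^ multiplicity p C) * (\<Prod>p\<in>P - {..<B}. p ^ multiplicity p C)"
    unfolding P_def by (intro prod.Int_Diff) simp
  also have "\<dots> \<le> (2*m)^B * 4^n"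
  proof (rule mult_le_mono)
    show "(\<Prod>p\<in>P \<inter> {..<B}. p ^ multiplicity p C) \<le> (2*m)^B"
    proof (rule prod_le_power)
      show "card (P \<inter> {..<B}) \<le> B"
        using card_mono[of "{..<B}" "P \<inter> {..<B}"] by simp
    qed (use m factor_le in auto)
    have large: "p ^ multiplicity p C = p \<and> p \<le> n" if "p \<in> P - {..<B}" for p
    proof -
      have p: "prime p" "multiplicity p C > 0" "B \<le> p"
        using that unfolding P_def C_def by (auto simp: prime_factors_multiplicity)
      have "B^2 \<le> p^2"
        using p(3) by (simp add: power_mono)
      then have "2*m < p^2"
        using B by linarith
      then have "multiplicity p C \<le> 1"
        unfolding C_def by (rule multiplicity_central_binomial_le_1[OF p(1) m])
      then have "multiplicity p C = 1"
        using p(2) by simp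
      then have "p ^ multiplicity p C = p"
        by simp
      moreover have "p \<le> 2*m"
        using factor_le[of p] that calculation by simp
      ultimately show ?thesis
        using no_prime[OF p(1)] by force
    qed
    have "(\<Prod>p\<in>P - {..<B}. p ^ multiplicity p C) \<le> \<Prod>(P - {..<B})"
      using large by (intro prod_mono) auto
    also have "\<dots> \<le> \<Prod>{p. prime p \<and> p \<le> n}"
    proof (rule dvd_imp_le)
      show "\<Prod>(P - {..<B}) dvd \<Prod>{p. prime p \<and> p \<le> n}"
        using large unfolding P_def
        by (intro prod_dvd_prod_subset) (auto intro: finite_subset[of _ "{..n}"] in_prime_factors_imp_prime)
      show "\<Prod>{p. prime p \<and> p \<le> n} > 0"
        by (intro prod_pos) (auto simp: prime_gt_0_nat)
    qed
    also have "\<dots> \<le> 4^n"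
      by (rule primorial_le_four_pow)
    finally show "(\<Prod>p\<in>P - {..<B}. p ^ multiplicity p C) \<le> 4^n" .
  qed
  finally show ?thesis
    unfolding C_def .
qed

lemma central_binomial_lower_bound_nat: "0 < m \<Longrightarrow> 4^m \<le> 2*m * ((2*m) choose m)"
proof -
  assume "0 < m"
  then have "real (4^m) \<le> real (2*m * ((2*m) choose m))"
    using central_binomial_lower_bound[of m] by (simp add: field_simps)
  then show ?thesis
    by (simp only: of_nat_le_iff)
qed

lemma mul_two_pow_lt_four_pow: "5 \<le> j \<Longrightarrow> (j+2) * (2^(j+2) + 1) + 4 < (4::nat)^j"
proof (induction j rule: dec_induct)
  case base
  then show ?case
    by simp
next
  case (step j)
  have "(Suc j + 2) * (2^(Suc j + 2) + 1) + 4 \<le> 4 * ((j+2) * (2^(j+2) + 1) + 4)"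
    by (simp add: algebra_simps)
  also have "\<dots> < 4 * 4^j"
    using step by simp
  finally show ?case
    by simp
qed

lemma exists_prime_between_large:
  fixes n :: nat
  assumes n: "1024 \<le> n"
  shows "\<exists>p. prime p \<and> n < p \<and> p \<le> 4*n - 8"
proof (rule ccontr)
  assume no_prime: "\<nexists>p. prime p \<and> n < p \<and> p \<le> 4*n - 8"
  define m where "m = 2*n - 4"
  obtain j where j: "4^j \<le> n" "n < 4^(j+1)"
    using ex_power_ivl1[of 4 n] n by auto
  have "5 \<le> j"
  proof (rule ccontr)
    assume "\<not> 5 \<le> j"
    then have "(4::nat)^(j+1) \<le> 4^5"
      by (intro power_increasing) auto
    then show False
      using j n by simp
  qed
  define B where "B = (2::nat)^(j+2)"
  have m: "m > 0" "2*m < 4^(j+2)"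
    using n j unfolding m_def by auto
  have "B^2 = (2^2)^(j+2)"
    unfolding B_def by (simp only: power_mult[symmetric] mult.commute)
  then have B2: "B^2 = 4^(j+2)"
    by simp
  have "4^m \<le> 2*m * ((2*m) choose m)"
    by (rule central_binomial_lower_bound_nat[OF m(1)])
  also have "\<dots> \<le> 2*m * ((2*m)^B * 4^n)"
    using m no_prime B2 unfolding m_def
    by (intro mult_le_mono2 central_binomial_le_without_large_primes) auto
  also have "\<dots> = (2*m)^(B+1) * 4^n"
    by simp
  also have "\<dots> \<le> (4^(j+2))^(B+1) * 4^n"
    using m by (intro mult_le_mono1 power_mono) auto
  also have "\<dots> = 4^((j+2)*(B+1) + n)"
    by (simp only: power_mult power_add)
  finally have "(4::nat)^m \<le> 4^((j+2)*(B+1) + n)" .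
  then have "m \<le> (j+2)*(B+1) + n"
    by (rule power_le_imp_le_exp[rotated]) simp
  then have "n \<le> (j+2)*(B+1) + 4"
    unfolding m_def by simp
  also have "\<dots> < 4^j"
    unfolding B_def using mul_two_pow_lt_four_pow[OF \<open>5 \<le> j\<close>] by simp
  finally show False
    using j by simp
qed

lemma exists_prime_between:
  fixes n :: nat
  assumes "4 \<le> n"
  shows "\<exists>p. prime p \<and> n < p \<and> p \<le> 4*n - 8"
proof -
  have witness: "\<exists>p. prime p \<and> n < p \<and> p \<le> 4*n - 8" if "prime q" "n < q" "q + 8 \<le> 4*n" for q
    using that by auto
  have primes: "prime (5::nat)" "prime (11::nat)" "prime (31::nat)" "prime (113::nat)"
    "prime (443::nat)" "prime (1031::nat)"
    by code_simp+
  consider "n = 4" | "5 \<le> n" "n \<le> 10" | "11 \<le> n" "n \<le> 30" | "31 \<le> n" "n \<le> 112"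
    | "113 \<le> n" "n \<le> 442" | "443 \<le> n" "n \<le> 1023" | "1024 \<le> n"
    using assms by linarith
  then show ?thesis
    using witness[OF primes(1)] witness[OF primes(2)] witness[OF primes(3)]
      witness[OF primes(4)] witness[OF primes(5)] witness[OF primes(6)] exists_prime_between_large
    by cases simp_all
qed

section \<open>Sidon sets modulo M\<close>

definition sidon_mod :: "'a::unique_euclidean_semiring \<Rightarrow> 'a set \<Rightarrow> bool" where
  "sidon_mod M A \<longleftrightarrow>
     (\<forall>a\<in>A. \<forall>b\<in>A. \<forall>c\<in>A. \<forall>d\<in>A. [a + b = c + d] (mod M) \<longrightarrow> {a, b} = {c, d})"

lemma sidon_mod_subset: "sidon_mod M A \<Longrightarrow> B \<subseteq> A \<Longrightarrow> sidon_mod M B"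
  unfolding sidon_mod_def by blast

lemma sidon_mod_imp_sidon:
  assumes "finite A" and "sidon_mod M A"
  shows "sidon A"
  unfolding sidon_def
proof (intro conjI ballI impI)
  fix a b c d
  assume "a \<in> A" "b \<in> A" "c \<in> A" "d \<in> A" "a + b = c + d"
  moreover from this(5) have "[a + b = c + d] (mod M)"
    by simp
  ultimately show "{a, b} = {c, d}"
    using assms(2) unfolding sidon_mod_def by blast
qed (fact assms(1))

lemma sidon_mod_int_image:
  assumes "sidon_mod M A"
  shows "sidon_mod (int M) (int ` A)"
  unfolding sidon_mod_def
proof (intro ballI impI)
  fix a b c d
  assume "a \<in> int ` A" "b \<in> int ` A" "c \<in> int ` A" "d \<in> int ` A"
    and sum: "[a + b = c + d] (mod int M)"
  then obtain a' b' c' d' where mem: "a' \<in> A" "b' \<in> A" "c' \<in> A" "d' \<in> A"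
    and eq: "a = int a'" "b = int b'" "c = int c'" "d = int d'"
    by blast
  from sum eq have "[a' + b' = c' + d'] (mod M)"
    by (simp flip: cong_int_iff)
  then have "{a', b'} = {c', d'}"
    using assms mem unfolding sidon_mod_def by blast
  then show "{a, b} = {c, d}"
    using eq by auto
qed

lemma sidon_mod_shift:
  fixes M c :: int
  assumes sidon: "sidon_mod M A" and shift: "\<And>a. a \<in> A \<Longrightarrow> [f a = a + c] (mod M)"
  shows "inj_on f A" and "sidon_mod M (f ` A)"
proof -
  have cancel: "[a + b = a' + b'] (mod M)" if "[f a + f b = f a' + f b'] (mod M)"
    and "a \<in> A" "b \<in> A" "a' \<in> A" "b' \<in> A" for a b a' b'
  proof -
    have "[f a + f b = (a + c) + (b + c)] (mod M)"
      using shift that by (intro cong_add) auto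
    moreover have "[f a' + f b' = (a' + c) + (b' + c)] (mod M)"
      using shift that by (intro cong_add) auto
    ultimately have "[(a + b) + 2*c = (a' + b') + 2*c] (mod M)"
      using that(1) by (metis cong_sym cong_trans add.commute add.left_commute mult_2 add.assoc)
    then show ?thesis
      by (simp add: cong_add_rcancel)
  qed
  show "inj_on f A"
  proof (rule inj_onI)
    fix a b
    assume "a \<in> A" "b \<in> A" "f a = f b"
    then have "[a + a = b + a] (mod M)"
      using cancel[of a a b a] by simp
    then show "a = b"
      using sidon \<open>a \<in> A\<close> \<open>b \<in> A\<close> unfolding sidon_mod_def by (metis doubleton_eq_iff)
  qed
  show "sidon_mod M (f ` A)"
    unfolding sidon_mod_def
  proof (intro ballI impI)
    fix x y u v
    assume "x \<in> f ` A" "y \<in> f ` A" "u \<in> f ` A" "v \<in> f ` A"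
      and sum: "[x + y = u + v] (mod M)"
    then obtain a b a' b' where mem: "a \<in> A" "b \<in> A" "a' \<in> A" "b' \<in> A"
      and eq: "x = f a" "y = f b" "u = f a'" "v = f b'"
      by blast
    have "[a + b = a' + b'] (mod M)"
      using cancel[OF _ mem] sum eq by simp
    then have "{a, b} = {a', b'}"
      using sidon mem unfolding sidon_mod_def by blast
    then show "{x, y} = {u, v}"
      using eq by auto
  qed
qed

lemma cong_pair_of_sum_and_product:
  fixes p a b c d :: int
  assumes "prime p" and "[a + b = c + d] (mod p)" and "[a * b = c * d] (mod p)"
  shows "[a = c] (mod p) \<or> [a = d] (mod p)"
proof -
  have "(a - c) * (a - d) = a * ((a + b) - (c + d)) - (a * b - c * d)"
    by (simp add: algebra_simps)
  moreover have "p dvd (a + b) - (c + d)" and "p dvd a * b - c * d"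
    using assms(2,3) by (simp_all add: cong_iff_dvd_diff)
  ultimately have "p dvd (a - c) * (a - d)"
    by simp
  then show ?thesis
    using assms(1) by (simp add: prime_dvd_mult_iff cong_iff_dvd_diff)
qed

(* A solution of x = i (mod p - 1), x = g^i (mod p), since p = 1 (mod p - 1) and
   (p - 1)^2 = 1 (mod p). *)
definition ruzsa_elem :: "nat \<Rightarrow> nat \<Rightarrow> nat \<Rightarrow> nat" where
  "ruzsa_elem p g i = i * p + (p - 1)^2 * g^i"

lemma ruzsa_elem_cong_index:
  assumes "0 < p"
  shows "[ruzsa_elem p g i = i] (mod p - 1)"
proof -
  have "ruzsa_elem p g i = i + (p - 1) * (i + (p - 1) * g^i)"
    using assms unfolding ruzsa_elem_def
    by (cases p) (simp_all add: algebra_simps power2_eq_square)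
  then show ?thesis
    by (simp add: cong_def)
qed

lemma ruzsa_elem_cong_power:
  assumes "0 < p"
  shows "[ruzsa_elem p g i = g^i] (mod p)"
proof (cases "p = 1")
  case False
  then have "(p - 1)^2 = p * (p - 2) + 1"
    using assms by (cases p) (simp_all add: algebra_simps power2_eq_square)
  then have "ruzsa_elem p g i = g^i + p * (i + (p - 2) * g^i)"
    unfolding ruzsa_elem_def by (simp add: algebra_simps)
  then show ?thesis
    by (simp add: cong_def)
qed simp

lemma ruzsa_elem_sum_cong:
  fixes p g :: nat
  assumes "0 < p"
    and sum: "[ruzsa_elem p g i1 + ruzsa_elem p g i2 = ruzsa_elem p g i3 + ruzsa_elem p g i4]
      (mod p * (p - 1))"
  shows "[i1 + i2 = i3 + i4] (mod p - 1)" and "[g^i1 + g^i2 = g^i3 + g^i4] (mod p)"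
proof -
  let ?x = "ruzsa_elem p g"
  have "[i1 + i2 = ?x i1 + ?x i2] (mod p - 1)"
    using ruzsa_elem_cong_index[OF \<open>0 < p\<close>] by (intro cong_add) (simp_all add: cong_sym)
  also have "[?x i1 + ?x i2 = ?x i3 + ?x i4] (mod p - 1)"
    using sum by (rule cong_dvd_modulus_nat) simp
  also have "[?x i3 + ?x i4 = i3 + i4] (mod p - 1)"
    using ruzsa_elem_cong_index[OF \<open>0 < p\<close>] by (intro cong_add)
  finally show "[i1 + i2 = i3 + i4] (mod p - 1)" .
  have "[g^i1 + g^i2 = ?x i1 + ?x i2] (mod p)"
    using ruzsa_elem_cong_power[OF \<open>0 < p\<close>] by (intro cong_add) (simp_all add: cong_sym)
  also have "[?x i1 + ?x i2 = ?x i3 + ?x i4] (mod p)"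
    using sum by (rule cong_dvd_modulus_nat) simp
  also have "[?x i3 + ?x i4 = g^i3 + g^i4] (mod p)"
    using ruzsa_elem_cong_power[OF \<open>0 < p\<close>] by (intro cong_add)
  finally show "[g^i1 + g^i2 = g^i3 + g^i4] (mod p)" .
qed

lemma ruzsa_index_pair:
  fixes p g :: nat
  assumes p: "prime p" and g: "residue_primroot p g"
    and i: "i1 < p - 1" "i2 < p - 1" "i3 < p - 1" "i4 < p - 1"
    and sum: "[ruzsa_elem p g i1 + ruzsa_elem p g i2 = ruzsa_elem p g i3 + ruzsa_elem p g i4]
      (mod p * (p - 1))"
  shows "{i1, i2} = {i3, i4}"
proof -
  have cop: "coprime p g" and ord: "ord p g = p - 1"
    using g p unfolding residue_primroot_def by (auto simp: totient_prime)
  have index_inj: "i = j" if "i < p - 1" "j < p - 1" "[i = j] (mod p - 1)" for i j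
    using that cong_less_modulus_unique_nat by blast
  have index_sum: "[i1 + i2 = i3 + i4] (mod p - 1)" and power_sum: "[g^i1 + g^i2 = g^i3 + g^i4] (mod p)"
    using ruzsa_elem_sum_cong[OF prime_gt_0_nat[OF p] sum] by blast+
  from index_sum have "[g^i1 * g^i2 = g^i3 * g^i4] (mod p)"
    using order_divides_expdiff[OF cop] ord by (simp flip: power_add)
  then have prod_int: "[int (g^i1) * int (g^i2) = int (g^i3) * int (g^i4)] (mod int p)"
    by (simp only: cong_int_iff flip: of_nat_mult)
  from power_sum have sum_int: "[int (g^i1) + int (g^i2) = int (g^i3) + int (g^i4)] (mod int p)"
    by (simp only: cong_int_iff flip: of_nat_add)
  have "[int (g^i1) = int (g^i3)] (mod int p) \<or> [int (g^i1) = int (g^i4)] (mod int p)"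
    using p by (intro cong_pair_of_sum_and_product[OF _ sum_int prod_int]) simp
  then have "[i1 = i3] (mod p - 1) \<or> [i1 = i4] (mod p - 1)"
    by (simp only: cong_int_iff order_divides_expdiff[OF cop] ord)
  then show ?thesis
  proof
    assume "[i1 = i3] (mod p - 1)"
    then have "i1 = i3"
      using index_inj i by blast
    moreover from this have "i2 = i4"
      using index_sum index_inj[OF i(2,4)] by (simp add: cong_add_lcancel_nat)
    ultimately show ?thesis
      by simp
  next
    assume "[i1 = i4] (mod p - 1)"
    then have "i1 = i4"
      using index_inj i by blast
    moreover from this have "i2 = i3"
      using index_sum index_inj[OF i(2,3)] by (metis add.commute cong_add_rcancel_nat)
    ultimately show ?thesis
      by auto
  qed
qed

lemma ruzsa_sidon_set:
  fixes p g :: nat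
  assumes p: "prime p" and g: "residue_primroot p g"
  shows "inj_on (ruzsa_elem p g) {..<p - 1}"
    and "sidon_mod (p * (p - 1)) (ruzsa_elem p g ` {..<p - 1})"
proof -
  have "0 < p"
    using p prime_gt_0_nat by blast
  show "inj_on (ruzsa_elem p g) {..<p - 1}"
  proof (rule inj_onI)
    fix i j
    assume "i \<in> {..<p - 1}" "j \<in> {..<p - 1}" "ruzsa_elem p g i = ruzsa_elem p g j"
    then show "i = j"
      using ruzsa_elem_cong_index[OF \<open>0 < p\<close>, of g] cong_less_modulus_unique_nat
      by (metis cong_sym cong_trans lessThan_iff)
  qed
  show "sidon_mod (p * (p - 1)) (ruzsa_elem p g ` {..<p - 1})"
    unfolding sidon_mod_def
  proof (intro ballI impI)
    fix a b c d
    assume "a \<in> ruzsa_elem p g ` {..<p - 1}" "b \<in> ruzsa_elem p g ` {..<p - 1}"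
      "c \<in> ruzsa_elem p g ` {..<p - 1}" "d \<in> ruzsa_elem p g ` {..<p - 1}"
      and sum: "[a + b = c + d] (mod p * (p - 1))"
    then obtain i1 i2 i3 i4 where i: "i1 < p - 1" "i2 < p - 1" "i3 < p - 1" "i4 < p - 1"
      and eq: "a = ruzsa_elem p g i1" "b = ruzsa_elem p g i2"
        "c = ruzsa_elem p g i3" "d = ruzsa_elem p g i4"
      by blast
    have "{i1, i2} = {i3, i4}"
      using sum unfolding eq by (rule ruzsa_index_pair[OF p g i])
    then show "{a, b} = {c, d}"
      using eq by auto
  qed
qed

lemma card_window_residues:
  fixes M L :: nat and a :: int
  assumes "L \<le> M"
  shows "card {w\<in>{0..<int M}. (a - w) mod int M < int L} = L"
proof -
  let ?r = "\<lambda>t. (a - t) mod int M"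
  have "{w\<in>{0..<int M}. (a - w) mod int M < int L} = ?r ` {0..<int L}"
  proof (intro equalityI subsetI)
    fix w
    assume w: "w \<in> {w\<in>{0..<int M}. (a - w) mod int M < int L}"
    then have "w = ?r (?r w)"
      by (simp add: mod_diff_right_eq)
    moreover have "?r w \<in> {0..<int L}"
      using w by simp
    ultimately show "w \<in> ?r ` {0..<int L}"
      by blast
  next
    fix w
    assume "w \<in> ?r ` {0..<int L}"
    then obtain t where t: "t \<in> {0..<int L}" "w = ?r t"
      by blast
    then have "?r w = t"
      using assms by (simp add: mod_diff_right_eq)
    then show "w \<in> {w\<in>{0..<int M}. (a - w) mod int M < int L}"
      using t assms by auto
  qed
  moreover have "inj_on ?r {0..<int L}"
  proof (rule inj_onI)
    fix s t
    assume "s \<in> {0..<int L}" "t \<in> {0..<int L}" "?r s = ?r t"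
    then have "?r (?r s) = ?r (?r t)"
      by simp
    then show "s = t"
      using \<open>s \<in> {0..<int L}\<close> \<open>t \<in> {0..<int L}\<close> assms by (simp add: mod_diff_right_eq)
  qed
  ultimately show ?thesis
    by (simp add: card_image)
qed

lemma sum_card_windows:
  fixes A :: "int set" and M L :: nat
  assumes "finite A" and "L \<le> M"
  shows "(\<Sum>w\<in>{0..<int M}. card {a\<in>A. (a - w) mod int M < int L}) = card A * L"
proof -
  have count: "card {x\<in>X. P x} = (\<Sum>x\<in>X. if P x then 1 else 0)" if "finite X" for X :: "int set" and P
    unfolding card_eq_sum by (rule sum.inter_filter[OF that])
  have "(\<Sum>w\<in>{0..<int M}. card {a\<in>A. (a - w) mod int M < int L})
      = (\<Sum>w\<in>{0..<int M}. \<Sum>a\<in>A. if (a - w) mod int M < int L then 1 else 0)"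
    by (intro sum.cong refl count assms(1))
  also have "\<dots> = (\<Sum>a\<in>A. \<Sum>w\<in>{0..<int M}. if (a - w) mod int M < int L then 1 else 0)"
    by (rule sum.swap)
  also have "\<dots> = (\<Sum>a\<in>A. L)"
  proof (rule sum.cong[OF refl])
    fix a
    show "(\<Sum>w\<in>{0..<int M}. if (a - w) mod int M < int L then 1 else 0) = L"
      using count[of "{0..<int M}"] card_window_residues[OF assms(2)] by simp
  qed
  finally show ?thesis
    by simp
qed

lemma exists_sidon_in_window:
  fixes A :: "int set" and M L k :: nat
  assumes fin: "finite A" and sidon: "sidon_mod (int M) A" and "L \<le> M"
    and dense: "M * k < card A * L"
  shows "\<exists>B \<subseteq> {1..int L}. sidon B \<and> k < card B"
proof -
  have "M > 0"
    using dense \<open>L \<le> M\<close> by (cases M) auto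
  obtain w where "k < card {a\<in>A. (a - w) mod int M < int L}"
  proof (rule ccontr)
    assume "\<not> thesis"
    then have "\<forall>w\<in>{0..<int M}. card {a\<in>A. (a - w) mod int M < int L} \<le> k"
      using that by (meson not_le)
    then have "(\<Sum>w\<in>{0..<int M}. card {a\<in>A. (a - w) mod int M < int L})
        \<le> of_nat (card {0..<int M}) * k"
      using sum_bounded_above[of "{0..<int M}" "\<lambda>w. card {a\<in>A. (a - w) mod int M < int L}" k]
      by blast
    then have "(\<Sum>w\<in>{0..<int M}. card {a\<in>A. (a - w) mod int M < int L}) \<le> M * k"
      by simp
    then show False
      using dense sum_card_windows[OF fin \<open>L \<le> M\<close>] by simp
  qed
  define A' where "A' = {a\<in>A. (a - w) mod int M < int L}"
  define f where "f a = (a - w) mod int M + 1" for a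
  have shift: "[f a = a + (1 - w)] (mod int M)" for a
    unfolding f_def cong_def by (simp add: mod_simps algebra_simps)
  have "sidon_mod (int M) A'"
    using sidon unfolding A'_def by (rule sidon_mod_subset) auto
  then have "inj_on f A'" and "sidon_mod (int M) (f ` A')"
    using shift by (rule sidon_mod_shift, rule sidon_mod_shift)
  moreover have "f ` A' \<subseteq> {1..int L}"
    unfolding A'_def f_def using \<open>M > 0\<close> by auto
  moreover have "finite A'"
    unfolding A'_def using fin by simp
  ultimately show ?thesis
    using \<open>k < card {a\<in>A. (a - w) mod int M < int L}\<close>
    unfolding A'_def[symmetric] by (intro exI[of _ "f ` A'"]) (simp add: card_image sidon_mod_imp_sidon)
qed

section \<open>Lower bound for h\<close>

lemma card_le_h:
  assumes "B \<subseteq> {1..int N}" and "sidon B"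
  shows "card B \<le> h N"
proof -
  have "{card A | A. A \<subseteq> {1..int N} \<and> sidon A} \<subseteq> card ` Pow {1..int N}"
    by auto
  then have "finite {card A | A. A \<subseteq> {1..int N} \<and> sidon A}"
    by (rule finite_subset) simp
  then show ?thesis
    unfolding h_def using assms by (intro Max_ge) auto
qed

lemma window_density:
  fixes p k N :: nat
  assumes "p * k < N" and "k + 1 < p"
  shows "p * (p - 1) * k < (p - 1) * min N (p * (p - 1))"
proof (cases "p * (p - 1) \<le> N")
  case True
  have "p * (p - 1) * k < p * (p - 1) * (p - 1)"
    using assms(2) by simp
  then show ?thesis
    using True by (simp add: mult.commute)
next
  case False
  have "p * (p - 1) * k = (p - 1) * (p * k)"
    by (simp add: ac_simps)
  also have "\<dots> < (p - 1) * N"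
    using assms by simp
  finally show ?thesis
    using False by simp
qed

lemma exists_large_sidon_subset:
  fixes N k :: nat
  assumes k: "3 \<le> k" and N: "(2*k - 1)^2 \<le> N"
  shows "\<exists>B \<subseteq> {1..int N}. sidon B \<and> k < card B"
proof -
  obtain p where p: "prime p" "k + 1 < p" "p \<le> 4*(k+1) - 8"
    using exists_prime_between[of "k+1"] k by auto
  obtain g where g: "residue_primroot p g"
    using prime_primitive_root_exists[OF prime_gt_1_nat[OF p(1)] p(1)] by blast
  define M where "M = p * (p - 1)"
  define A where "A = int ` ruzsa_elem p g ` {..<p - 1}"
  have "finite A" and card_A: "card A = p - 1"
    unfolding A_def using ruzsa_sidon_set(1)[OF p(1) g] by (simp_all add: card_image inj_on_def)
  have "sidon_mod (int M) A"
    unfolding A_def M_def by (rule sidon_mod_int_image[OF ruzsa_sidon_set(2)[OF p(1) g]])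
  have "p * k < N"
  proof -
    have "p * k \<le> (4*k - 4) * k"
      using p by simp
    also have "\<dots> < (2*k - 1)^2"
      using k by (cases k) (simp_all add: power2_eq_square algebra_simps)
    finally show ?thesis
      using N by simp
  qed
  then have "M * k < card A * min N M"
    unfolding M_def card_A using p(2) by (rule window_density)
  then obtain B where "B \<subseteq> {1..int (min N M)}" "sidon B" "k < card B"
    using exists_sidon_in_window[OF \<open>finite A\<close> \<open>sidon_mod (int M) A\<close> min.cobounded2] by blast
  moreover have "{1..int (min N M)} \<subseteq> {1..int N}"
    by simp
  ultimately show ?thesis
    by blast
qed

lemma h_lower_bound:
  fixes N k :: nat
  assumes "2 \<le> N" and "(2*k - 1)^2 \<le> N"
  shows "k < h N"
proof -
  have "\<exists>B \<subseteq> {1..int N}. sidon B \<and> k < card B"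
  proof (cases "3 \<le> k")
    case True
    then show ?thesis
      using assms(2) by (rule exists_large_sidon_subset)
  next
    case False
    then consider "k \<le> 1" | "k = 2"
      by linarith
    then show ?thesis
    proof cases
      case 1
      then show ?thesis
        using assms(1) by (intro exI[of _ "{1, 2}"]) (auto simp: sidon_def)
    next
      case 2
      then show ?thesis
        using assms(2) by (intro exI[of _ "{1, 2, 4}"]) (auto simp: sidon_def)
    qed
  qed
  then show ?thesis
    using card_le_h by (meson order_less_le_trans)
qed

lemma floor_sqrt_square_le: "\<lfloor>sqrt (real N)\<rfloor>^2 \<le> int N"
proof -
  have "real_of_int (\<lfloor>sqrt (real N)\<rfloor>^2) \<le> real N"
    using sqrt_ge_absD[of "of_int \<lfloor>sqrt (real N)\<rfloor>" "real N"] by simp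
  then show ?thesis
    by linarith
qed

theorem mainTheorem11:
  fixes N :: nat
  assumes "N \<ge> 5"
  shows "int (h N) > \<lfloor>(of_int \<lfloor>sqrt (real N)\<rfloor> + 1) / (2::real)\<rfloor>"
proof -
  define s where "s = \<lfloor>sqrt (real N)\<rfloor>"
  define k where "k = nat ((s + 1) div 2)"
  have "2 \<le> sqrt (real N)"
    using assms by (intro real_le_rsqrt) simp
  then have "2 \<le> s"
    unfolding s_def by linarith
  then have "int (2*k - 1)^2 \<le> s^2"
    unfolding k_def by (intro power_mono) (simp_all add: of_nat_diff)
  also have "\<dots> \<le> int N"
    unfolding s_def by (rule floor_sqrt_square_le)
  finally have "k < h N"
    using assms by (intro h_lower_bound) (simp_all flip: of_nat_power)
  moreover have "\<lfloor>(of_int s + 1) / (2::real)\<rfloor> = (s + 1) div 2"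
    using floor_divide_of_int_eq[of "s + 1" 2] by simp
  ultimately show ?thesis
    unfolding s_def k_def using \<open>2 \<le> s\<close> by simp
qed


end
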